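(* Let $A$ be an $n\times n$ generalized tournament matrix. If there exists $\alpha>1/2$ such that for every clan $I$ of $A$ with $|I|\geq 2$ the principal submatrix $A[I]$ is $\alpha$-separable, then $A$ is $\alpha$-linear.
   Context: A generalized tournament matrix of order $n$ is a real $n\times n$ matrix $M=(m_{ij})$ with nonnegative entries satisfying $M+M^{t}=J_n-I_n$. Write $[n]=\{1,\ldots,n\}$. A clan of $M$ is a subset $X\subseteq[n]$ such that for all $i,j\in X$ and $k\in[n]\setminus X$, $m_{ik}=m_{jk}$ and $m_{ki}=m_{kj}$. For $\alpha>1/2$, a matrix $M$ indexed by a set $V$ (such as a principal submatrix $A[I]$ indexed by $I$) is $\alpha$-separable if $V$ can be partitioned into two nonempty sets $X,Y$ with $m_{xy}=\alpha$ for all $x\in X,y\in Y$; $M$ is $\alpha$-linear if there is an ordering $x_1,\ldots,x_n$ of $[n]$ with $m_{x_ix_j}=\alpha$ whenever $i<j$. *)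

theory Defs
  imports Complex_Main
begin

(* An n x n real matrix is modelled as M :: nat => nat => real, with entries
   M i j for i, j in [n] = {1..n}; values outside [n] are irrelevant. *)

definition gen_tournament :: "nat \<Rightarrow> (nat \<Rightarrow> nat \<Rightarrow> real) \<Rightarrow> bool" where
  "gen_tournament n M \<longleftrightarrow>
     (\<forall>i\<in>{1..n}. \<forall>j\<in>{1..n}. M i j \<ge> 0) \<and>
     (\<forall>i\<in>{1..n}. \<forall>j\<in>{1..n}. M i j + M j i = (if i = j then 0 else 1))"

definition is_clan :: "nat \<Rightarrow> (nat \<Rightarrow> nat \<Rightarrow> real) \<Rightarrow> nat set \<Rightarrow> bool" where
  "is_clan n M X \<longleftrightarrow> X \<subseteq> {1..n} \<and>
     (\<forall>i\<in>X. \<forall>j\<in>X. \<forall>k\<in>{1..n} - X. M i k = M j k \<and> M k i = M k j)"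

definition separable_on :: "real \<Rightarrow> (nat \<Rightarrow> nat \<Rightarrow> real) \<Rightarrow> nat set \<Rightarrow> bool" where
  "separable_on \<alpha> M V \<longleftrightarrow>
     (\<exists>X Y. X \<noteq> {} \<and> Y \<noteq> {} \<and> X \<inter> Y = {} \<and> X \<union> Y = V \<and>
            (\<forall>x\<in>X. \<forall>y\<in>Y. M x y = \<alpha>))"

definition linear_mat :: "nat \<Rightarrow> real \<Rightarrow> (nat \<Rightarrow> nat \<Rightarrow> real) \<Rightarrow> bool" where
  "linear_mat n \<alpha> M \<longleftrightarrow>
     (\<exists>x. bij_betw x {1..n} {1..n} \<and>
          (\<forall>i\<in>{1..n}. \<forall>j\<in>{1..n}. i < j \<longrightarrow> M (x i) (x j) = \<alpha>))"

end

theory Submission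
  imports Defs
begin

(* Induction on the size of a clan: separate it as X, Y with all entries from X to Y equal
   to alpha; then all entries from Y to X equal 1 - alpha, so X and Y are again clans, and
   alpha-linear orderings of X and of Y concatenate to one of the whole clan. Applied to
   the clan [n] this gives the theorem. *)

lemma gen_tournament_converse:
  assumes "gen_tournament n M" "i \<in> {1..n}" "j \<in> {1..n}" "i \<noteq> j"
  shows "M j i = 1 - M i j"
proof -
  have "M i j + M j i = 1"
    using assms unfolding gen_tournament_def by auto
  then show ?thesis by linarith
qed

lemma is_clan_whole_index_set: "is_clan n M {1..n}"
  unfolding is_clan_def by auto

lemma is_clan_within_clan:
  assumes clan: "is_clan n M V" and "X \<subseteq> V"
    and inside: "\<forall>i\<in>X. \<forall>j\<in>X. \<forall>k\<in>V - X. M i k = M j k \<and> M k i = M k j"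
  shows "is_clan n M X"
  unfolding is_clan_def
proof (intro conjI[of "_ \<subseteq> _"] ballI)
  show "X \<subseteq> {1..n}"
    using clan \<open>X \<subseteq> V\<close> unfolding is_clan_def by blast
next
  fix i j k assume "i \<in> X" "j \<in> X" "k \<in> {1..n} - X"
  show "M i k = M j k \<and> M k i = M k j"
  proof (cases "k \<in> V")
    case True
    then show ?thesis using inside \<open>i \<in> X\<close> \<open>j \<in> X\<close> \<open>k \<in> {1..n} - X\<close> by blast
  next
    case False
    then have "k \<in> {1..n} - V" using \<open>k \<in> {1..n} - X\<close> by blast
    then show ?thesis
      using clan \<open>X \<subseteq> V\<close> \<open>i \<in> X\<close> \<open>j \<in> X\<close> unfolding is_clan_def by blast
  qed
qed

lemma is_clan_separation_part:
  assumes "gen_tournament n M" "is_clan n M (X \<union> Y)" "X \<inter> Y = {}"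
    and X_to_Y: "\<forall>x\<in>X. \<forall>y\<in>Y. M x y = \<alpha>"
  shows "is_clan n M X" "is_clan n M Y"
proof -
  have Y_to_X: "M y x = 1 - \<alpha>" if "x \<in> X" "y \<in> Y" for x y
  proof -
    have "x \<in> {1..n}" "y \<in> {1..n}" "x \<noteq> y"
      using that assms(2,3) unfolding is_clan_def by auto
    then have "M y x = 1 - M x y"
      by (rule gen_tournament_converse[OF assms(1)])
    then show ?thesis
      using X_to_Y that by simp
  qed
  have "X \<subseteq> X \<union> Y" "Y \<subseteq> X \<union> Y" "(X \<union> Y) - X = Y" "(X \<union> Y) - Y = X"
    using assms(3) by auto
  then show "is_clan n M X" "is_clan n M Y"
    using is_clan_within_clan[OF assms(2)] X_to_Y Y_to_X by simp_all
qed

lemma clan_alpha_ordering: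
  assumes "gen_tournament n M"
    and "\<forall>I. is_clan n M I \<and> card I \<ge> 2 \<longrightarrow> separable_on \<alpha> M I"
    and "is_clan n M V"
  shows "\<exists>xs. distinct xs \<and> set xs = V \<and> sorted_wrt (\<lambda>a b. M a b = \<alpha>) xs"
  using assms(3)
proof (induction "card V" arbitrary: V rule: less_induct)
  case less
  have "finite V"
    using less.prems unfolding is_clan_def by (meson finite_atLeastAtMost finite_subset)
  show ?case
  proof (cases "card V \<ge> 2")
    case False
    then consider "card V = 0" | "card V = 1" by linarith
    then show ?thesis
    proof cases
      case 1
      then have "V = {}" using \<open>finite V\<close> by simp
      then show ?thesis by (intro exI[of _ "[]"]) simp
    next
      case 2
      then obtain v where "V = {v}" by (rule card_1_singletonE)
      then show ?thesis by (intro exI[of _ "[v]"]) simp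
    qed
  next
    case True
    then have "separable_on \<alpha> M V"
      using assms(2) less.prems by blast
    then obtain X Y where XY: "X \<noteq> {}" "Y \<noteq> {}" "X \<inter> Y = {}" "V = X \<union> Y"
      and X_to_Y: "\<forall>x\<in>X. \<forall>y\<in>Y. M x y = \<alpha>"
      unfolding separable_on_def by auto
    have clans: "is_clan n M X" "is_clan n M Y"
      using is_clan_separation_part[OF assms(1) _ XY(3) X_to_Y] less.prems
      unfolding XY(4) by blast+
    have "X \<subset> V" "Y \<subset> V"
      using XY by blast+
    then have "card X < card V" "card Y < card V"
      using psubset_card_mono[OF \<open>finite V\<close>] by blast+
    then obtain xs ys
      where xs: "distinct xs" "set xs = X" "sorted_wrt (\<lambda>a b. M a b = \<alpha>) xs"
        and ys: "distinct ys" "set ys = Y" "sorted_wrt (\<lambda>a b. M a b = \<alpha>) ys"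
      using less.hyps clans by blast
    have "distinct (xs @ ys)" "set (xs @ ys) = V"
      using xs ys XY by auto
    moreover have "sorted_wrt (\<lambda>a b. M a b = \<alpha>) (xs @ ys)"
      using xs ys X_to_Y by (simp add: sorted_wrt_append)
    ultimately show ?thesis
      by blast
  qed
qed

lemma linear_mat_of_sorted_list:
  assumes "distinct xs" "set xs = {1..n}" "sorted_wrt (\<lambda>a b. M a b = \<alpha>) xs"
  shows "linear_mat n \<alpha> M"
proof -
  have len: "length xs = n"
    using assms(1,2) distinct_card by fastforce
  have "bij_betw (\<lambda>i. i - 1) {1..n} {..<n}"
    by (rule bij_betw_byWitness[where f' = "\<lambda>i. i + 1"]) auto
  moreover have "bij_betw ((!) xs) {..<n} {1..n}"
    using bij_betw_nth[OF assms(1)] len assms(2) by simp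
  ultimately have "bij_betw (\<lambda>i. xs ! (i - 1)) {1..n} {1..n}"
    using bij_betw_trans by (simp add: comp_def)
  moreover have "\<forall>i\<in>{1..n}. \<forall>j\<in>{1..n}. i < j \<longrightarrow> M (xs ! (i - 1)) (xs ! (j - 1)) = \<alpha>"
    using assms(3) len by (auto simp: sorted_wrt_iff_nth_less)
  ultimately show ?thesis
    unfolding linear_mat_def by blast
qed

theorem lemma5p7:
  fixes n :: nat and A :: "nat \<Rightarrow> nat \<Rightarrow> real" and \<alpha> :: real
  assumes "gen_tournament n A"
    and "\<alpha> > 1/2"
    and "\<forall>I. is_clan n A I \<and> card I \<ge> 2 \<longrightarrow> separable_on \<alpha> A I"
  shows "linear_mat n \<alpha> A"
proof -
  obtain xs where "distinct xs" "set xs = {1..n}" "sorted_wrt (\<lambda>a b. A a b = \<alpha>) xs"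
    using clan_alpha_ordering[OF assms(1,3) is_clan_whole_index_set] by blast
  then show ?thesis
    by (rule linear_mat_of_sorted_list)
qed

end
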